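(* Let $M=(S,\mathrm{Act},P)$ be an MDP, $T\subseteq S$, $\mathrm{opt}\in\{\min,\max\}$, $r$ the least fixed point of $\tilde D^{\mathrm{opt}}$, $Z=\{s\in S\mid\Pr^{\mathrm{opt}}_s(\Diamond T)=0\}$, and $\sigma$ a strategy with $\Pr^\sigma_s(\Diamond T)=\Pr^{\mathrm{opt}}_s(\Diamond T)$ for all $s\in S$. For $s\in S$ let $z(s)$ be the probability, in the Markov chain induced by $\sigma$ started at $s$, of the set of paths $s_0s_1\ldots$ for which there is $i$ with $s_i\in Z$ and $s_j\notin T$ for all $j<i$. Then for all $s\in S$: $r(s)<\infty$ implies $z(s)>0$.
   Context: An MDP is a tuple $M=(S,\mathrm{Act},P)$ with $S$ finite, $\mathrm{Act}$ finite, $P\colon S\times\mathrm{Act}\times S\to[0,1]$ with $\sum_{s'}P(s,a,s')\in\{0,1\}$; $\mathrm{Act}(s)=\{a\mid\sum_{s'}P(s,a,s')=1\}$ is nonempty for all $s$; $\mathrm{Post}(s,a)=\{s'\mid P(s,a,s')>0\}$. A strategy is $\sigma\colon S\to\mathrm{Act}$ with $\sigma(s)\in\mathrm{Act}(s)$, inducing a Markov chain with transitions $P(s,\sigma(s),\cdot)$; $\Pr^\sigma_s(\Diamond T)$ is the probability of visiting $T$ from $s$ and $\Pr^{\mathrm{opt}}_s(\Diamond T)=\mathrm{opt}_\sigma\Pr^\sigma_s(\Diamond T)$. $\mathbb{N}_\infty=\mathbb{N}\cup\{\infty\}$ with $\infty+1=\infty$. $\tilde D^{\mathrm{opt}}(r)(s)=\infty$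 for $s\in T$ and $\mathrm{opt}_{a\in\mathrm{Act}(s)}\big(\min_{s'\in\mathrm{Post}(s,a)}r(s')+[\exists u,v\in\mathrm{Post}(s,a)\colon r(u)\ne r(v)]\big)$ for $s\notin T$ ($[\varphi]\in\{0,1\}$ the Iverson bracket); its least fixed point w.r.t. the pointwise order exists. *)

theory Defs
  imports Complex_Main "HOL-Library.Extended_Nat"
begin

definition Act :: "('s::finite \<Rightarrow> 'act::finite \<Rightarrow> 's \<Rightarrow> real) \<Rightarrow> 's \<Rightarrow> 'act set" where
  "Act P s = {a. (\<Sum>t\<in>UNIV. P s a t) = 1}"

definition Post :: "('s::finite \<Rightarrow> 'act::finite \<Rightarrow> 's \<Rightarrow> real) \<Rightarrow> 's \<Rightarrow> 'act \<Rightarrow> 's set" where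
  "Post P s a = {t. P s a t > 0}"

definition is_mdp :: "('s::finite \<Rightarrow> 'act::finite \<Rightarrow> 's \<Rightarrow> real) \<Rightarrow> bool" where
  "is_mdp P \<longleftrightarrow> (\<forall>s a t. 0 \<le> P s a t \<and> P s a t \<le> 1)
     \<and> (\<forall>s a. (\<Sum>t\<in>UNIV. P s a t) \<in> {0, 1})
     \<and> (\<forall>s. Act P s \<noteq> {})"

definition is_strategy :: "('s::finite \<Rightarrow> 'act::finite \<Rightarrow> 's \<Rightarrow> real) \<Rightarrow> ('s \<Rightarrow> 'act) \<Rightarrow> bool" where
  "is_strategy P \<sigma> \<longleftrightarrow> (\<forall>s. \<sigma> s \<in> Act P s)"

text \<open>Probability, in the Markov chain induced by \<sigma>, of the paths from s that
  visit B within at most n steps while all earlier states lie in A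
  (constrained/bounded reachability).\<close>

fun until_n :: "('s::finite \<Rightarrow> 'act::finite \<Rightarrow> 's \<Rightarrow> real) \<Rightarrow> ('s \<Rightarrow> 'act) \<Rightarrow> 's set \<Rightarrow> 's set \<Rightarrow> nat \<Rightarrow> 's \<Rightarrow> real" where
  "until_n P \<sigma> A B 0 s = (if s \<in> B then 1 else 0)"
| "until_n P \<sigma> A B (Suc n) s =
     (if s \<in> B then 1 else if s \<notin> A then 0
      else (\<Sum>t\<in>UNIV. P s (\<sigma> s) t * until_n P \<sigma> A B n t))"

text \<open>Unbounded version: probability of the (increasing) union of the bounded
  events, i.e. the supremum of the bounded probabilities.\<close>

definition until_prob :: "('s::finite \<Rightarrow> 'act::finite \<Rightarrow> 's \<Rightarrow> real) \<Rightarrow> ('s \<Rightarrow> 'act) \<Rightarrow> 's set \<Rightarrow> 's set \<Rightarrow> 's \<Rightarrow> real" where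
  "until_prob P \<sigma> A B s = (SUP n. until_n P \<sigma> A B n s)"

definition reach_prob :: "('s::finite \<Rightarrow> 'act::finite \<Rightarrow> 's \<Rightarrow> real) \<Rightarrow> ('s \<Rightarrow> 'act) \<Rightarrow> 's set \<Rightarrow> 's \<Rightarrow> real" where
  "reach_prob P \<sigma> T s = until_prob P \<sigma> UNIV T s"

datatype opt = OptMin | OptMax

text \<open>Pr^opt_s(\<diamond>T) (finitely many memoryless deterministic strategies)\<close>
definition opt_reach_prob :: "('s::finite \<Rightarrow> 'act::finite \<Rightarrow> 's \<Rightarrow> real) \<Rightarrow> opt \<Rightarrow> 's set \<Rightarrow> 's \<Rightarrow> real" where
  "opt_reach_prob P o' T s =
     (case o' of
        OptMin \<Rightarrow> (INF \<sigma>\<in>{\<sigma>. is_strategy P \<sigma>}. reach_prob P \<sigma> T s)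
      | OptMax \<Rightarrow> (SUP \<sigma>\<in>{\<sigma>. is_strategy P \<sigma>}. reach_prob P \<sigma> T s))"

definition opt_enat :: "opt \<Rightarrow> enat set \<Rightarrow> enat" where
  "opt_enat o' X = (case o' of OptMin \<Rightarrow> Min X | OptMax \<Rightarrow> Max X)"

definition Dtilde :: "('s::finite \<Rightarrow> 'act::finite \<Rightarrow> 's \<Rightarrow> real) \<Rightarrow> 's set \<Rightarrow> opt \<Rightarrow> ('s \<Rightarrow> enat) \<Rightarrow> ('s \<Rightarrow> enat)" where
  "Dtilde P T o' r s =
     (if s \<in> T then \<infinity>
      else opt_enat o' ((\<lambda>a. Min (r ` Post P s a)
               + (if \<exists>u\<in>Post P s a. \<exists>v\<in>Post P s a. r u \<noteq> r v then 1 else 0)) ` Act P s))"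

end

theory Submission
  imports Defs
begin

text \<open>Suppose the probability of reaching Z before T from s were 0. The set W of states with
  this property is closed under the transitions of \<sigma> from states outside T, and no state of W
  lies in Z, so by optimality of \<sigma> every state of W reaches T with positive probability. A
  minimum principle (reachability probabilities are averages of their successors' values)
  then shows that \<sigma> reaches T from s almost surely.

  On the other hand, a prefixed point u of \<tilde>D with u(s) finite yields a strategy \<tau> that
  is at least as good as \<sigma> (a minimising strategy, or \<sigma> itself when maximising) such that
  at every state of finite u the least u-value among the \<tau>-successors is at most u, and
  strictly smaller unless all these successors share one u-value. By induction on u(s), from s
  the strategy \<tau> either reaches a state of smaller u or stays forever in a closed set avoiding
  T, so \<tau> misses T with positive probability. Hence every prefixed point, and in particular
  the least fixed point, is infinite at s.\<close>

lemma mdp_nonneg: "is_mdp P \<Longrightarrow> 0 \<le> P s a t"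
  by (simp add: is_mdp_def)

lemma strategy_sum_eq_1: "is_strategy P \<tau> \<Longrightarrow> (\<Sum>t\<in>UNIV. P s (\<tau> s) t) = 1"
  by (simp add: is_strategy_def Act_def)

lemma sum_weighted_eq_lower_bound:
  fixes p f :: "'a::finite \<Rightarrow> real"
  assumes p_nonneg: "\<And>x. 0 \<le> p x" and p_sum: "sum p UNIV = 1"
    and lower: "\<And>x. 0 < p x \<Longrightarrow> m \<le> f x" and avg: "(\<Sum>x\<in>UNIV. p x * f x) \<le> m"
    and "0 < p y"
  shows "f y = m"
proof -
  have nonneg: "0 \<le> p x * (f x - m)" for x
    using p_nonneg[of x] lower[of x] by (cases "p x = 0") auto
  have "(\<Sum>x\<in>UNIV. p x * (f x - m)) = (\<Sum>x\<in>UNIV. p x * f x) - m"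
    by (simp add: right_diff_distrib sum_subtractf flip: sum_distrib_right) (simp add: p_sum)
  also have "\<dots> \<le> 0" using avg by simp
  moreover have "0 \<le> (\<Sum>x\<in>UNIV. p x * (f x - m))"
    by (rule sum_nonneg) (rule nonneg)
  ultimately have "(\<Sum>x\<in>UNIV. p x * (f x - m)) = 0" by linarith
  then have "p y * (f y - m) = 0"
    using sum_nonneg_eq_0_iff[of UNIV "\<lambda>x. p x * (f x - m)"] nonneg by simp
  with \<open>0 < p y\<close> show ?thesis by simp
qed

context
  fixes P :: "'s::finite \<Rightarrow> 'act::finite \<Rightarrow> 's \<Rightarrow> real" and \<tau> :: "'s \<Rightarrow> 'act"
  assumes mdp: "is_mdp P" and strategy: "is_strategy P \<tau>"
begin

lemma until_n_nonneg: "0 \<le> until_n P \<tau> A B n t"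
proof (induction n arbitrary: t)
  case (Suc n)
  then show ?case by (auto intro!: sum_nonneg mult_nonneg_nonneg mdp_nonneg[OF mdp])
qed simp

lemma until_n_le_1: "until_n P \<tau> A B n t \<le> 1"
proof (induction n arbitrary: t)
  case (Suc n)
  have "(\<Sum>x\<in>UNIV. P t (\<tau> t) x * until_n P \<tau> A B n x) \<le> (\<Sum>x\<in>UNIV. P t (\<tau> t) x)"
    by (intro sum_mono mult_left_le mdp_nonneg[OF mdp] Suc.IH)
  then show ?case by (simp add: strategy_sum_eq_1[OF strategy])
qed simp

lemma incseq_until_n: "incseq (\<lambda>n. until_n P \<tau> A B n t)"
proof -
  have "until_n P \<tau> A B n t \<le> until_n P \<tau> A B (Suc n) t" for n
  proof (induction n arbitrary: t)
    case 0
    have "0 \<le> until_n P \<tau> A B (Suc 0) t" by (rule until_n_nonneg)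
    then show ?case by (cases "t \<in> B") auto
  next
    case (Suc n)
    have "(\<Sum>x\<in>UNIV. P t (\<tau> t) x * until_n P \<tau> A B n x)
        \<le> (\<Sum>x\<in>UNIV. P t (\<tau> t) x * until_n P \<tau> A B (Suc n) x)"
      by (intro sum_mono mult_left_mono mdp_nonneg[OF mdp] Suc.IH)
    then show ?case by simp
  qed
  then show ?thesis by (rule incseq_SucI)
qed

lemma bdd_above_until_n: "bdd_above (range (\<lambda>n. until_n P \<tau> A B n t))"
  using until_n_le_1 by (intro bdd_aboveI[of _ 1]) auto

lemma until_n_tendsto_until_prob: "(\<lambda>n. until_n P \<tau> A B n t) \<longlonglongrightarrow> until_prob P \<tau> A B t"
  unfolding until_prob_def by (rule LIMSEQ_incseq_SUP[OF bdd_above_until_n incseq_until_n])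

lemma until_n_le_until_prob: "until_n P \<tau> A B n t \<le> until_prob P \<tau> A B t"
  by (rule incseq_le[OF incseq_until_n until_n_tendsto_until_prob])

lemma until_prob_nonneg: "0 \<le> until_prob P \<tau> A B t"
  using until_n_nonneg[of A B 0 t] until_n_le_until_prob[of A B 0 t] by linarith

lemma until_prob_le_1: "until_prob P \<tau> A B t \<le> 1"
  by (rule LIMSEQ_le_const2[OF until_n_tendsto_until_prob]) (simp add: until_n_le_1)

lemma until_prob_unfold:
  assumes "t \<in> A" "t \<notin> B"
  shows "until_prob P \<tau> A B t = (\<Sum>x\<in>UNIV. P t (\<tau> t) x * until_prob P \<tau> A B x)"
proof (rule LIMSEQ_unique)
  show "(\<lambda>n. until_n P \<tau> A B (Suc n) t) \<longlonglongrightarrow> until_prob P \<tau> A B t"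
    using until_n_tendsto_until_prob by (rule LIMSEQ_Suc)
  show "(\<lambda>n. until_n P \<tau> A B (Suc n) t)
      \<longlonglongrightarrow> (\<Sum>x\<in>UNIV. P t (\<tau> t) x * until_prob P \<tau> A B x)"
    using assms by (simp add: tendsto_sum tendsto_mult_left until_n_tendsto_until_prob)
qed

lemma until_prob_eq_0_successor:
  assumes "t \<in> A" "t \<notin> B" "until_prob P \<tau> A B t = 0" "0 < P t (\<tau> t) t'"
  shows "until_prob P \<tau> A B t' = 0"
  by (rule sum_weighted_eq_lower_bound[where p = "P t (\<tau> t)" and m = 0])
    (use assms in \<open>simp_all add: mdp_nonneg[OF mdp] strategy_sum_eq_1[OF strategy]
      until_prob_nonneg until_prob_unfold[OF assms(1,2), symmetric]\<close>)

lemma until_prob_eq_1_successor: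
  assumes "t \<in> A" "t \<notin> B" "until_prob P \<tau> A B t = 1" "0 < P t (\<tau> t) t'"
  shows "until_prob P \<tau> A B t' = 1"
proof -
  have "- until_prob P \<tau> A B t' = - 1"
    by (rule sum_weighted_eq_lower_bound[where p = "P t (\<tau> t)"])
      (use assms in \<open>simp_all add: mdp_nonneg[OF mdp] strategy_sum_eq_1[OF strategy]
        until_prob_le_1 sum_negf until_prob_unfold[OF assms(1,2), symmetric]\<close>)
  then show ?thesis by simp
qed

end

lemma until_prob_eq_0_if_closed:
  assumes mdp: "is_mdp P" and disjoint: "C \<inter> B = {}"
    and closed: "\<And>x y. x \<in> C \<Longrightarrow> 0 < P x (\<tau> x) y \<Longrightarrow> y \<in> C" and "t \<in> C"
  shows "until_prob P \<tau> A B t = 0"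
proof -
  have "until_n P \<tau> A B n x = 0" if "x \<in> C" for n x
    using that
  proof (induction n arbitrary: x)
    case 0
    with disjoint show ?case by auto
  next
    case (Suc n)
    have "(\<Sum>y\<in>UNIV. P x (\<tau> x) y * until_n P \<tau> A B n y) = 0"
    proof (rule sum.neutral, rule ballI)
      fix y
      show "P x (\<tau> x) y * until_n P \<tau> A B n y = 0"
      proof (cases "0 < P x (\<tau> x) y")
        case True
        with Suc show ?thesis by (simp add: closed)
      next
        case False
        with mdp_nonneg[OF mdp, of x "\<tau> x" y] show ?thesis by simp
      qed
    qed
    with Suc.prems disjoint show ?case by auto
  qed
  with \<open>t \<in> C\<close> show ?thesis by (simp add: until_prob_def)
qed

lemma until_prob_target: "t \<in> B \<Longrightarrow> until_prob P \<tau> A B t = 1"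
proof -
  assume "t \<in> B"
  then have "until_n P \<tau> A B n t = 1" for n by (cases n) simp_all
  then show ?thesis by (simp add: until_prob_def)
qed

lemma reach_prob_eq_1_if_closed:
  fixes P :: "'s::finite \<Rightarrow> 'act::finite \<Rightarrow> 's \<Rightarrow> real"
  assumes mdp: "is_mdp P" and strategy: "is_strategy P \<tau>"
    and closed: "\<And>t t'. t \<in> W \<Longrightarrow> t \<notin> T \<Longrightarrow> 0 < P t (\<tau> t) t' \<Longrightarrow> t' \<in> W"
    and pos: "\<And>t. t \<in> W \<Longrightarrow> 0 < reach_prob P \<tau> T t" and "s \<in> W"
  shows "reach_prob P \<tau> T s = 1"
proof -
  let ?v = "until_prob P \<tau> UNIV T"
  define m where "m = Min (?v ` W)"
  have W_ne: "W \<noteq> {}" using \<open>s \<in> W\<close> by blast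
  have "m \<in> ?v ` W" unfolding m_def using W_ne by (intro Min_in) auto
  then obtain t0 where t0: "t0 \<in> W" "?v t0 = m" by blast
  have m_le: "m \<le> ?v t" if "t \<in> W" for t
    using that by (simp add: m_def)
  have "m = 1"
  proof (rule ccontr)
    assume "m \<noteq> 1"
    define C where "C = {t \<in> W. ?v t = m}"
    have C_T: "C \<inter> T = {}"
      using \<open>m \<noteq> 1\<close> by (auto simp: C_def until_prob_target)
    have C_closed: "t' \<in> C" if "t \<in> C" and edge: "0 < P t (\<tau> t) t'" for t t'
    proof -
      have t: "t \<notin> T" "t \<in> W" "?v t = m" using that C_T by (auto simp: C_def)
      have "?v t' = m"
      proof (rule sum_weighted_eq_lower_bound[where p = "P t (\<tau> t)"])
        show "0 \<le> P t (\<tau> t) x" for x by (rule mdp_nonneg[OF mdp])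
        show "sum (P t (\<tau> t)) UNIV = 1" by (rule strategy_sum_eq_1[OF strategy])
        show "m \<le> ?v x" if "0 < P t (\<tau> t) x" for x
          using closed[OF t(2,1) that] m_le by blast
        show "(\<Sum>x\<in>UNIV. P t (\<tau> t) x * ?v x) \<le> m"
          using until_prob_unfold[OF mdp strategy, of t UNIV T] t by simp
      qed (rule edge)
      with closed[OF t(2,1) edge] show ?thesis by (simp add: C_def)
    qed
    have "?v t0 = 0"
      by (rule until_prob_eq_0_if_closed[OF mdp C_T C_closed]) (use t0 in \<open>auto simp: C_def\<close>)
    with pos[OF t0(1)] show False by (simp add: reach_prob_def)
  qed
  then show ?thesis
    using m_le[OF \<open>s \<in> W\<close>] until_prob_le_1[OF mdp strategy]
    by (simp add: reach_prob_def order_antisym)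
qed

definition Dtilde_action ::
    "('s::finite \<Rightarrow> 'act::finite \<Rightarrow> 's \<Rightarrow> real) \<Rightarrow> ('s \<Rightarrow> enat) \<Rightarrow> 's \<Rightarrow> 'act \<Rightarrow> enat" where
  "Dtilde_action P r s a =
     Min (r ` Post P s a) + (if \<exists>u\<in>Post P s a. \<exists>v\<in>Post P s a. r u \<noteq> r v then 1 else 0)"

lemma Dtilde_eq:
  "Dtilde P T o' r s = (if s \<in> T then \<infinity> else opt_enat o' (Dtilde_action P r s ` Act P s))"
  by (simp add: Dtilde_def Dtilde_action_def)

lemma prefixed_Dtilde_finite:
  assumes "Dtilde P T o' u \<le> u" "u t < \<infinity>"
  shows "t \<notin> T" and "opt_enat o' (Dtilde_action P u t ` Act P t) \<le> u t"
proof -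
  have le: "Dtilde P T o' u t \<le> u t" using assms(1) by (rule le_funD)
  with assms(2) show "t \<notin> T" by (auto simp: Dtilde_eq)
  with le show "opt_enat o' (Dtilde_action P u t ` Act P t) \<le> u t" by (simp add: Dtilde_eq)
qed

lemma Dtilde_action_le_imp_Post_const:
  fixes u :: "'s::finite \<Rightarrow> enat"
  assumes le: "Dtilde_action P u y a \<le> u y" and fin: "u y < \<infinity>"
    and above: "\<And>w. w \<in> Post P y a \<Longrightarrow> u y \<le> u w" and w: "w \<in> Post P y a"
  shows "u w = u y"
proof -
  let ?Q = "Post P y a"
  have Q: "finite ?Q" "?Q \<noteq> {}" using w by auto
  have Min_ge: "u y \<le> Min (u ` ?Q)" using Q above by simp
  have const: "\<not> (\<exists>x\<in>?Q. \<exists>x'\<in>?Q. u x \<noteq> u x')"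
  proof
    assume "\<exists>x\<in>?Q. \<exists>x'\<in>?Q. u x \<noteq> u x'"
    then have "Dtilde_action P u y a = Min (u ` ?Q) + 1" by (simp add: Dtilde_action_def)
    with Min_ge le have "u y + 1 \<le> u y" by (metis add_right_mono order_trans)
    with fin show False by (cases "u y") auto
  qed
  have "Min (u ` ?Q) \<in> u ` ?Q" using Q by simp
  then obtain w' where "w' \<in> ?Q" "Min (u ` ?Q) = u w'" by blast
  with const w have "Min (u ` ?Q) = u w" by metis
  moreover have "Dtilde_action P u y a = Min (u ` ?Q)"
    unfolding Dtilde_action_def if_not_P[OF const] by simp
  ultimately have "u w \<le> u y" using le by simp
  with above[OF w] show ?thesis by simp
qed

lemma reach_prob_lt_1_if_Dtilde_action_le:
  fixes u :: "'s::finite \<Rightarrow> enat"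
  assumes mdp: "is_mdp P" and strategy: "is_strategy P \<tau>"
    and descent: "\<And>t. u t < \<infinity> \<Longrightarrow> t \<notin> T \<and> Dtilde_action P u t (\<tau> t) \<le> u t"
    and "u s < \<infinity>"
  shows "reach_prob P \<tau> T s < 1"
  using \<open>u s < \<infinity>\<close>
proof (induction "u s" arbitrary: s rule: less_induct)
  case less
  define E where "E = {(a, b). u a < \<infinity> \<and> 0 < P a (\<tau> a) b}"
  have backward: "reach_prob P \<tau> T a < 1" if "(a, b) \<in> E\<^sup>*" "reach_prob P \<tau> T b < 1" for a b
    using that
  proof (induction rule: converse_rtrancl_induct)
    case (step a c)
    then have "a \<notin> T" and edge: "0 < P a (\<tau> a) c" and c: "reach_prob P \<tau> T c < 1"
      using descent by (auto simp: E_def)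
    show ?case
    proof (rule ccontr)
      assume "\<not> reach_prob P \<tau> T a < 1"
      then have "until_prob P \<tau> UNIV T a = 1"
        using until_prob_le_1[OF mdp strategy, of UNIV T a] by (simp add: reach_prob_def)
      then have "until_prob P \<tau> UNIV T c = 1"
        by (rule until_prob_eq_1_successor[OF mdp strategy UNIV_I \<open>a \<notin> T\<close> _ edge])
      with c show False by (simp add: reach_prob_def)
    qed
  qed
  show ?case
  proof (cases "\<exists>t. (s, t) \<in> E\<^sup>* \<and> u t < u s")
    case True
    then obtain t where "(s, t) \<in> E\<^sup>*" "u t < u s" by blast
    with less.hyps[of t] less.prems backward show ?thesis by force
  next
    case False
    have same: "u t = u s" if "(s, t) \<in> E\<^sup>*" for t
      using that
    proof (induction rule: rtrancl_induct)
      case (step y z)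
      with less.prems have y: "u y < \<infinity>" "0 < P y (\<tau> y) z" by (auto simp: E_def)
      have "u y \<le> u w" if "w \<in> Post P y (\<tau> y)" for w
      proof -
        have "(s, w) \<in> E\<^sup>*"
          by (rule rtrancl_into_rtrancl[OF step.hyps(1)]) (use y(1) that in \<open>simp add: E_def Post_def\<close>)
        with False have "\<not> u w < u s" by blast
        with step.IH show ?thesis by simp
      qed
      with descent[OF y(1)] y step.IH show ?case
        using Dtilde_action_le_imp_Post_const[of P u y "\<tau> y" z] by (simp add: Post_def)
    qed simp
    have C_finite: "u x < \<infinity>" if "x \<in> E\<^sup>* `` {s}" for x
      using same[of x] that less.prems by simp
    have "until_prob P \<tau> UNIV T s = 0"
    proof (rule until_prob_eq_0_if_closed[OF mdp, where C = "E\<^sup>* `` {s}"])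
      show "E\<^sup>* `` {s} \<inter> T = {}" using C_finite descent by blast
      show "y \<in> E\<^sup>* `` {s}" if "x \<in> E\<^sup>* `` {s}" "0 < P x (\<tau> x) y" for x y
      proof -
        have "(x, y) \<in> E" using C_finite[OF that(1)] that(2) by (simp add: E_def)
        with that(1) show ?thesis by (metis Image_singleton_iff rtrancl_into_rtrancl)
      qed
    qed simp
    then show ?thesis by (simp add: reach_prob_def)
  qed
qed

lemma opt_reach_prob_OptMin_le:
  assumes mdp: "is_mdp P" and "is_strategy P \<tau>"
  shows "opt_reach_prob P OptMin T s \<le> reach_prob P \<tau> T s"
  unfolding opt_reach_prob_def opt.case
proof (rule cINF_lower)
  show "bdd_below ((\<lambda>\<sigma>. reach_prob P \<sigma> T s) ` {\<sigma>. is_strategy P \<sigma>})"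
    by (rule bdd_belowI[of _ 0]) (auto simp: reach_prob_def until_prob_nonneg[OF mdp])
qed (use assms in simp)

lemma strategy_below_prefixed_Dtilde:
  assumes mdp: "is_mdp P" and strategy: "is_strategy P \<sigma>"
    and opt: "\<forall>s. reach_prob P \<sigma> T s = opt_reach_prob P o' T s"
    and pre: "Dtilde P T o' u \<le> u"
  obtains \<tau> where "is_strategy P \<tau>" and "\<And>t. u t < \<infinity> \<Longrightarrow> Dtilde_action P u t (\<tau> t) \<le> u t"
    and "\<And>s. reach_prob P \<sigma> T s \<le> reach_prob P \<tau> T s"
proof (cases o')
  case OptMin
  define \<tau> where "\<tau> t = arg_min_on (Dtilde_action P u t) (Act P t)" for t
  have Act: "finite (Act P t)" "Act P t \<noteq> {}" for t
    using mdp by (auto simp: is_mdp_def)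
  have "is_strategy P \<tau>"
    unfolding is_strategy_def \<tau>_def using arg_min_if_finite(1)[OF Act] by blast
  moreover have "Dtilde_action P u t (\<tau> t) \<le> u t" if "u t < \<infinity>" for t
  proof -
    have "Dtilde_action P u t (\<tau> t) \<le> Min (Dtilde_action P u t ` Act P t)"
      unfolding \<tau>_def using Act by (simp add: arg_min_least)
    also have "\<dots> \<le> u t"
      using prefixed_Dtilde_finite(2)[OF pre that] OptMin by (simp add: opt_enat_def)
    finally show ?thesis .
  qed
  moreover have "reach_prob P \<sigma> T s \<le> reach_prob P \<tau> T s" for s
    using opt opt_reach_prob_OptMin_le[OF mdp \<open>is_strategy P \<tau>\<close>] OptMin by simp
  ultimately show ?thesis by (rule that)
next
  case OptMax
  have \<sigma>_le: "Dtilde_action P u t (\<sigma> t) \<le> u t" if "u t < \<infinity>" for t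
  proof -
    have "Dtilde_action P u t (\<sigma> t) \<le> Max (Dtilde_action P u t ` Act P t)"
      using strategy by (simp add: is_strategy_def)
    also have "\<dots> \<le> u t"
      using prefixed_Dtilde_finite(2)[OF pre that] OptMax by (simp add: opt_enat_def)
    finally show ?thesis .
  qed
  show ?thesis by (rule that[OF strategy \<sigma>_le]) simp_all
qed

lemma lfp_Dtilde_eq_infinity:
  assumes mdp: "is_mdp P" and strategy: "is_strategy P \<sigma>"
    and opt: "\<forall>s. reach_prob P \<sigma> T s = opt_reach_prob P o' T s"
    and almost_sure: "reach_prob P \<sigma> T s = 1"
  shows "lfp (Dtilde P T o') s = \<infinity>"
proof -
  have "u s = \<infinity>" if pre: "Dtilde P T o' u \<le> u" for u
  proof (rule ccontr)
    assume "u s \<noteq> \<infinity>"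
    obtain \<tau> where \<tau>: "is_strategy P \<tau>" "\<And>t. u t < \<infinity> \<Longrightarrow> Dtilde_action P u t (\<tau> t) \<le> u t"
      "reach_prob P \<sigma> T s \<le> reach_prob P \<tau> T s"
      using strategy_below_prefixed_Dtilde[OF mdp strategy opt pre] by metis
    have "reach_prob P \<tau> T s < 1"
      by (rule reach_prob_lt_1_if_Dtilde_action_le[OF mdp \<tau>(1)])
        (use prefixed_Dtilde_finite(1)[OF pre] \<tau>(2) \<open>u s \<noteq> \<infinity>\<close> in auto)
    with \<tau>(3) almost_sure show False by simp
  qed
  then show ?thesis by (simp add: lfp_def flip: top_enat_def)
qed

theorem lemma10:
  fixes P :: "'s::finite \<Rightarrow> 'act::finite \<Rightarrow> 's \<Rightarrow> real"
    and T :: "'s set" and o' :: opt and \<sigma> :: "'s \<Rightarrow> 'act" and s :: 's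
  assumes "is_mdp P"
    and "is_strategy P \<sigma>"
    and "\<forall>s. reach_prob P \<sigma> T s = opt_reach_prob P o' T s"
    and "r = lfp (Dtilde P T o')"
    and "Z = {s. opt_reach_prob P o' T s = 0}"
    and "r s < \<infinity>"
  shows "until_prob P \<sigma> (- T) Z s > 0"
proof (rule ccontr)
  let ?W = "{t. until_prob P \<sigma> (- T) Z t = 0}"
  assume "\<not> until_prob P \<sigma> (- T) Z s > 0"
  then have "s \<in> ?W" using until_prob_nonneg[OF assms(1,2), of "- T" Z s] by simp
  have W_Z: "t \<notin> Z" if "t \<in> ?W" for t
    using that until_prob_target[of t Z P \<sigma> "- T"] by auto
  have "reach_prob P \<sigma> T s = 1"
  proof (rule reach_prob_eq_1_if_closed[OF assms(1,2) _ _ \<open>s \<in> ?W\<close>])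
    show "t' \<in> ?W" if "t \<in> ?W" "t \<notin> T" "0 < P t (\<sigma> t) t'" for t t'
      using until_prob_eq_0_successor[OF assms(1,2)] that W_Z[OF that(1)] by simp
    show "0 < reach_prob P \<sigma> T t" if "t \<in> ?W" for t
      using W_Z[OF that] assms(3,5) until_prob_nonneg[OF assms(1,2), of UNIV T t]
      by (force simp: reach_prob_def)
  qed
  then have "r s = \<infinity>" using lfp_Dtilde_eq_infinity[OF assms(1-3)] assms(4) by simp
  with assms(6) show False by simp
qed

end
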